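(* In the cone setting of the context, for any $h\in\mathcal B_{\mathbb C}$ and all $z\in\mathbb C$ with $|z|<(\sqrt2\|h\|)^{-1}$ we have $e+zh\in\mathcal C_{\mathbb C}$ and \[\delta_{\mathcal C}(e,e+zh)\le\ln\Big(\frac{1+|z|\sqrt2\|h\|}{1-|z|\sqrt2\|h\|}\Big)<\infty.\]
   Context: Cone setting. $V$ is a real topological vector space, $\mathcal S\subset V'$ a set of linear functionals such that $\ell(x)=0$ for all $\ell\in\mathcal S$ implies $x=0$, $C_{\mathbb R}=\{h\in V\setminus\{0\}:\ell(h)\ge0\ \forall\ell\in\mathcal S\}$, and $e\in C_{\mathbb R}$ is such that for every $h\in V$ some $\lambda\ge0$ has $\lambda e-h\in C_{\mathbb R}$. Norm $\|h\|=\inf\{\lambda\ge0:\ell(\lambda e\pm h)\ge0\ \forall\ell\in\mathcal S\}$; $\mathcal B_{\mathbb R}$ the completion of $V$; $\mathcal C_{\mathbb R}=\{h\in\mathcal B_{\mathbb R}\setminus\{0\}:\ell(h)\ge0\ \forall\ell\in\mathcal S\}$; $\mathcal C'_{\mathbb R}=\{\ell\in\mathcal B'_{\mathbb R}:\ell\ge0\text{ on }\mathcal C_{\mathbb R}\}$. $\mathcal S_*$ is the weak-$*$ closure of the convex hull of $\{\lambda\ell:\lambda>0,\ell\in\mathcal S\}$; there exist $m\in\mathcal S_*$, $\kappa\in(0,1)$ with $m(e)=1$ and $m(h)\ge\kappa\|h\|$ on $\mathcal C_{\mathbb R}$. $\mathcal B_{\mathbb C}$ is the complexification (norm $\|x+iy\|=\sup_\theta(\|\Re(e^{i\theta}(x+iy))\|^2+\|\Im(e^{i\theta}(x+iy))\|^2)^{1/2}$),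 real functionals extended complex-linearly. $\mathcal C_{\mathbb C}=\{z(x+iy):z\ne0,x,y\in\mathcal C_{\mathbb R}\}$, $\mathcal C'_{\mathbb C}=\{\ell\in\mathcal B'_{\mathbb C}:\ell(h)\ne0\ \forall h\in\mathcal C_{\mathbb C}\}$. For $h,g\in\mathcal C_{\mathbb C}$, $E(h,g)=\{\ell(h)/\ell(g):\ell\in\mathcal C'_{\mathbb C}\}$ and $\delta_{\mathcal C}(h,g)=\ln\frac{\sup_{z\in E(h,g)}|z|}{\inf_{z\in E(h,g)}|z|}$. *)

theory Defs
  imports "HOL-Analysis.Analysis"
begin

text \<open>The completed real space B_R is modelled as a real Banach space type 'a;
  V is a dense linear subspace of it (so 'a is the completion of V).
  The complexification B_C is modelled as pairs (x,y) standing for x + i y.\<close>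

definition real_cone :: "('a::real_vector \<Rightarrow> real) set \<Rightarrow> 'a set \<Rightarrow> 'a set" where
  "real_cone S W = {h \<in> W. h \<noteq> 0 \<and> (\<forall>l\<in>S. l h \<ge> 0)}"

definition order_unit_norm :: "('a::real_vector \<Rightarrow> real) set \<Rightarrow> 'a \<Rightarrow> 'a \<Rightarrow> real" where
  "order_unit_norm S e h = Inf {lam. lam \<ge> 0 \<and> (\<forall>l\<in>S. l (lam *\<^sub>R e + h) \<ge> 0 \<and> l (lam *\<^sub>R e - h) \<ge> 0)}"

text \<open>Weak-* closure (pointwise convergence on the space) of the convex hull of the
  positive multiples of S, i.e. of the finite positive combinations of elements of S,
  intersected with the continuous dual of B_R.\<close>
definition S_star :: "('a::real_normed_vector \<Rightarrow> real) set \<Rightarrow> ('a \<Rightarrow> real) set" where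
  "S_star S = {m. bounded_linear m \<and>
     (\<forall>F::'a set. \<forall>\<epsilon>>0. finite F \<longrightarrow>
        (\<exists>L c. finite L \<and> L \<noteq> {} \<and> L \<subseteq> S \<and> (\<forall>l\<in>L. c l > (0::real)) \<and>
               (\<forall>x\<in>F. \<bar>(\<Sum>l\<in>L. c l * l x) - m x\<bar> < \<epsilon>)))}"

definition cone_setting ::
  "'a::banach set \<Rightarrow> ('a \<Rightarrow> real) set \<Rightarrow> 'a \<Rightarrow> bool" where
  "cone_setting V S e \<longleftrightarrow>
     subspace V \<and> closure V = UNIV \<and>
     (\<forall>l\<in>S. bounded_linear l) \<and>
     (\<forall>x\<in>V. (\<forall>l\<in>S. l x = 0) \<longrightarrow> x = 0) \<and>
     e \<in> real_cone S V \<and>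
     (\<forall>h\<in>V. \<exists>lam\<ge>0. lam *\<^sub>R e - h \<in> real_cone S V) \<and>
     (\<forall>h\<in>V. norm h = order_unit_norm S e h) \<and>
     (\<exists>m \<kappa>. m \<in> S_star S \<and> 0 < \<kappa> \<and> \<kappa> < 1 \<and> m e = 1 \<and>
        (\<forall>h\<in>real_cone S UNIV. m h \<ge> \<kappa> * norm h))"

definition cscale :: "complex \<Rightarrow> 'a::real_vector \<times> 'a \<Rightarrow> 'a \<times> 'a" where
  "cscale z p = (Re z *\<^sub>R fst p - Im z *\<^sub>R snd p, Re z *\<^sub>R snd p + Im z *\<^sub>R fst p)"

definition cnorm :: "'a::real_normed_vector \<times> 'a \<Rightarrow> real" where
  "cnorm p = (SUP \<theta>. sqrt ((norm (cos \<theta> *\<^sub>R fst p - sin \<theta> *\<^sub>R snd p))\<^sup>2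
                      + (norm (sin \<theta> *\<^sub>R fst p + cos \<theta> *\<^sub>R snd p))\<^sup>2))"

text \<open>Complex-linear continuous functionals on B_C correspond exactly to real-linear
  bounded maps L : B_R \<Rightarrow> complex, acting by (x,y) \<mapsto> L x + i L y
  (this is also the complex-linear extension of a real functional).\<close>
definition capply :: "('a \<Rightarrow> complex) \<Rightarrow> 'a \<times> 'a \<Rightarrow> complex" where
  "capply L p = L (fst p) + \<i> * L (snd p)"

definition complex_cone :: "('a::real_normed_vector \<Rightarrow> real) set \<Rightarrow> ('a \<times> 'a) set" where
  "complex_cone S = {cscale z (x, y) | z x y. z \<noteq> 0 \<and> x \<in> real_cone S UNIV \<and> y \<in> real_cone S UNIV}"

definition complex_dual_cone :: "('a::real_normed_vector \<Rightarrow> real) set \<Rightarrow> ('a \<Rightarrow> complex) set" where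
  "complex_dual_cone S = {L. bounded_linear L \<and> (\<forall>h\<in>complex_cone S. capply L h \<noteq> 0)}"

definition Eset :: "('a::real_normed_vector \<Rightarrow> real) set \<Rightarrow> 'a \<times> 'a \<Rightarrow> 'a \<times> 'a \<Rightarrow> complex set" where
  "Eset S h g = {capply L h / capply L g | L. L \<in> complex_dual_cone S}"

text \<open>Hilbert-type distance; value \<infinity> when the ratio sup/inf is not a finite
  positive real (sup infinite, inf zero, or E empty).\<close>
definition delta_C :: "('a::real_normed_vector \<Rightarrow> real) set \<Rightarrow> 'a \<times> 'a \<Rightarrow> 'a \<times> 'a \<Rightarrow> ereal" where
  "delta_C S h g =
    (let A = cmod ` Eset S h g in
     if A \<noteq> {} \<and> bdd_above A \<and> Inf A > 0 then ereal (ln (Sup A / Inf A)) else \<infinity>)"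

end

theory Submission
  imports Defs
begin

(* For norm u < 1 the order-unit norm gives l (e + u) \<ge> 0 for every l \<in> S when u \<in> V, and
   by continuity and density for every u; writing (e, 0) + (p, q) as ((1 - i)/2) (e + p - q, e + p + q)
   then shows that (e, 0) + w lies in the complex cone whenever the two components of w have norms
   summing to less than 1, which holds for w = z h since that sum is at most |z| sqrt 2 cnorm h = t < 1.
   Every L in the dual cone therefore satisfies |L(z h)| \<le> t |L e|: otherwise a multiple c z with
   |c z| sqrt 2 cnorm h < 1 would make L vanish on the cone element (e, 0) + c z h.  Hence every
   element of E((e,0), (e,0) + z h) has modulus in [1/(1 + t), 1/(1 - t)], and E is nonempty because
   the functional m, which is \<ge> \<kappa> norm on the real cone, lies in the dual cone. *)

lemma norm_le_if_affine_nonvanishing: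
  fixes a b :: complex and t :: real
  assumes "0 \<le> t" and nonzero: "\<And>c. cmod c * t < 1 \<Longrightarrow> a + c * b \<noteq> 0"
  shows "cmod b \<le> t * cmod a"
proof (rule ccontr)
  assume "\<not> cmod b \<le> t * cmod a"
  hence gt: "t * cmod a < cmod b" by simp
  hence "b \<noteq> 0" using \<open>0 \<le> t\<close> by (metis mult_nonneg_nonneg norm_ge_zero norm_zero not_le)
  hence "a + (- a / b) * b = 0" by simp
  moreover have "cmod (- a / b) * t < 1"
    using gt \<open>b \<noteq> 0\<close> by (simp add: norm_divide divide_less_eq mult.commute)
  ultimately show False using nonzero by blast
qed

lemma norm_divide_add_bounds:
  fixes a b :: complex
  assumes "a \<noteq> 0" and b: "cmod b \<le> t * cmod a" and "t < 1"
  shows "1 / (1 + t) \<le> cmod (a / (a + b))" and "cmod (a / (a + b)) \<le> 1 / (1 - t)"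
proof -
  have "0 \<le> t * cmod a" using b norm_ge_zero order_trans by blast
  hence "0 \<le> t" using \<open>a \<noteq> 0\<close> by (simp add: zero_le_mult_iff)
  have lo: "(1 - t) * cmod a \<le> cmod (a + b)"
    using norm_diff_ineq[of a b] b by (simp add: algebra_simps)
  have hi: "cmod (a + b) \<le> (1 + t) * cmod a"
    using norm_triangle_ineq[of a b] b by (simp add: algebra_simps)
  have pos: "0 < (1 - t) * cmod a" using \<open>a \<noteq> 0\<close> \<open>t < 1\<close> by simp
  hence "0 < cmod (a + b)" using lo by linarith
  have "cmod a / ((1 + t) * cmod a) \<le> cmod a / cmod (a + b)"
    using hi \<open>0 < cmod (a + b)\<close> \<open>0 \<le> t\<close> \<open>a \<noteq> 0\<close> by (intro divide_left_mono mult_pos_pos) auto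
  thus "1 / (1 + t) \<le> cmod (a / (a + b))"
    using \<open>a \<noteq> 0\<close> \<open>0 \<le> t\<close> by (simp add: norm_divide)
  have "cmod a / cmod (a + b) \<le> cmod a / ((1 - t) * cmod a)"
    using lo pos \<open>0 < cmod (a + b)\<close> \<open>t < 1\<close> \<open>a \<noteq> 0\<close> by (intro divide_left_mono mult_pos_pos) auto
  thus "cmod (a / (a + b)) \<le> 1 / (1 - t)"
    using \<open>a \<noteq> 0\<close> by (simp add: norm_divide)
qed

lemma cscale_mult: "cscale (c * d) p = cscale c (cscale d p)"
  by (simp add: cscale_def algebra_simps)

lemma cscale_of_real: "cscale (of_real r) p = r *\<^sub>R p"
  by (simp add: cscale_def scaleR_prod_def)

lemma cscale_polar: "cscale z p = cmod z *\<^sub>R cscale (cis (Arg z)) p"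
  by (metis cscale_mult cscale_of_real rcis_cmod_Arg rcis_def)

lemma capply_add: "linear L \<Longrightarrow> capply L (p + q) = capply L p + capply L q"
  by (simp add: capply_def linear_add algebra_simps)

lemma capply_cscale: "linear L \<Longrightarrow> capply L (cscale c p) = c * capply L p"
  by (simp add: capply_def cscale_def linear_add linear_diff linear_scale scaleR_conv_of_real
      complex_eq_iff algebra_simps)

lemma capply_real: "linear L \<Longrightarrow> capply L (x, 0) = L x"
  by (simp add: capply_def linear_0)

lemma norm_cscale_components_le:
  "norm (fst (cscale z p)) \<le> cmod z * (norm (fst p) + norm (snd p))"
  "norm (snd (cscale z p)) \<le> cmod z * (norm (fst p) + norm (snd p))"
proof -
  have "norm (fst (cscale z p)) \<le> \<bar>Re z\<bar> * norm (fst p) + \<bar>Im z\<bar> * norm (snd p)"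
    unfolding cscale_def by (metis fst_conv norm_scaleR norm_triangle_ineq4)
  also have "\<dots> \<le> cmod z * norm (fst p) + cmod z * norm (snd p)"
    by (intro add_mono mult_right_mono) (simp_all add: abs_Re_le_cmod abs_Im_le_cmod)
  finally show "norm (fst (cscale z p)) \<le> cmod z * (norm (fst p) + norm (snd p))"
    by (simp add: algebra_simps)
  have "norm (snd (cscale z p)) \<le> \<bar>Re z\<bar> * norm (snd p) + \<bar>Im z\<bar> * norm (fst p)"
    unfolding cscale_def by (metis snd_conv norm_scaleR norm_triangle_ineq)
  also have "\<dots> \<le> cmod z * norm (snd p) + cmod z * norm (fst p)"
    by (intro add_mono mult_right_mono) (simp_all add: abs_Re_le_cmod abs_Im_le_cmod)
  finally show "norm (snd (cscale z p)) \<le> cmod z * (norm (fst p) + norm (snd p))"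
    by (simp add: algebra_simps)
qed

lemma cnorm_eq_SUP_cis:
  "cnorm p = (SUP \<theta>. sqrt ((norm (fst (cscale (cis \<theta>) p)))\<^sup>2 + (norm (snd (cscale (cis \<theta>) p)))\<^sup>2))"
  by (simp add: cnorm_def cscale_def add.commute)

lemma norm_rotation_le_cnorm:
  "sqrt ((norm (fst (cscale (cis \<theta>) p)))\<^sup>2 + (norm (snd (cscale (cis \<theta>) p)))\<^sup>2) \<le> cnorm p"
proof -
  have "sqrt ((norm (fst (cscale (cis \<phi>) p)))\<^sup>2 + (norm (snd (cscale (cis \<phi>) p)))\<^sup>2)
      \<le> norm (fst (cscale (cis \<phi>) p)) + norm (snd (cscale (cis \<phi>) p))" for \<phi>
    by (rule sqrt_sum_squares_le_sum) auto
  also have "\<dots> \<phi> \<le> 2 * (norm (fst p) + norm (snd p))" for \<phi>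
    using norm_cscale_components_le[of "cis \<phi>" p] by simp
  finally show ?thesis
    unfolding cnorm_eq_SUP_cis by (intro cSUP_upper bdd_aboveI2) auto
qed

lemma cnorm_nonneg: "0 \<le> cnorm p"
  by (rule order_trans[OF real_sqrt_ge_zero norm_rotation_le_cnorm]) simp

lemma norm_cscale_le_cnorm:
  "norm (fst (cscale z p)) + norm (snd (cscale z p)) \<le> cmod z * sqrt 2 * cnorm p"
proof -
  define a b where "a = norm (fst (cscale (cis (Arg z)) p))" and "b = norm (snd (cscale (cis (Arg z)) p))"
  have "norm (fst (cscale z p)) + norm (snd (cscale z p)) = cmod z * (a + b)"
    by (subst (1 2) cscale_polar) (simp add: a_def b_def distrib_left)
  also have "a + b \<le> sqrt 2 * cmod (Complex a b)"
    using complex_abs_le_norm[of "Complex a b"] by (simp add: a_def b_def)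
  also have "cmod (Complex a b) \<le> cnorm p"
    using norm_rotation_le_cnorm by (simp add: complex_norm a_def b_def)
  finally show ?thesis by (simp add: mult_left_mono mult.assoc)
qed

lemma cone_setting_functional:
  assumes "cone_setting V S e" and "l \<in> S"
  shows "bounded_linear l" and "0 \<le> l e"
  using assms by (simp_all add: cone_setting_def real_cone_def)

lemma cone_settingD:
  assumes "cone_setting V S e"
  shows "subspace V" and "closure V = UNIV" and "e \<in> V" and "e \<noteq> 0"
    and "\<And>x. x \<in> V \<Longrightarrow> \<forall>l\<in>S. l x = 0 \<Longrightarrow> x = 0"
  using assms by (simp_all add: cone_setting_def real_cone_def)

lemma cone_setting_norm_eq:
  assumes "cone_setting V S e" and "u \<in> V"
  shows "norm u = order_unit_norm S e u"
  using assms by (simp add: cone_setting_def)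

lemma cone_setting_order_bounded:
  assumes cs: "cone_setting V S e" and "u \<in> V"
  obtains a where "0 \<le> a" and "\<And>l. l \<in> S \<Longrightarrow> l u \<le> a * l e"
proof -
  have "\<exists>a\<ge>0. a *\<^sub>R e - u \<in> real_cone S V"
    using assms by (simp add: cone_setting_def)
  then obtain a where "0 \<le> a" and a: "a *\<^sub>R e - u \<in> real_cone S V" by blast
  have "l u \<le> a * l e" if "l \<in> S" for l
  proof -
    have "0 \<le> l (a *\<^sub>R e - u)" using a that by (simp add: real_cone_def)
    thus ?thesis using cone_setting_functional(1)[OF cs that, THEN bounded_linear.linear]
      by (simp add: linear_diff linear_scale)
  qed
  thus ?thesis using \<open>0 \<le> a\<close> that by blast
qed

lemma cone_setting_order_bound_lt:
  assumes cs: "cone_setting V S e" and "u \<in> V" and "norm u < r"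
  obtains lam where "0 \<le> lam" "lam < r"
    "\<And>l. l \<in> S \<Longrightarrow> 0 \<le> l (lam *\<^sub>R e + u) \<and> 0 \<le> l (lam *\<^sub>R e - u)"
proof -
  define X where "X = {lam. 0 \<le> lam \<and> (\<forall>l\<in>S. 0 \<le> l (lam *\<^sub>R e + u) \<and> 0 \<le> l (lam *\<^sub>R e - u))}"
  obtain a where "0 \<le> a" and a: "\<And>l. l \<in> S \<Longrightarrow> l u \<le> a * l e"
    using cone_setting_order_bounded[OF cs \<open>u \<in> V\<close>] by blast
  have "- u \<in> V" using cone_settingD(1)[OF cs] \<open>u \<in> V\<close> by (rule subspace_neg)
  then obtain b where "0 \<le> b" and b: "\<And>l. l \<in> S \<Longrightarrow> l (- u) \<le> b * l e"
    using cone_setting_order_bounded[OF cs] by blast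
  \<comment> \<open>X must be shown nonempty: Inf of the empty set is unspecified.\<close>
  have "0 \<le> l (max a b *\<^sub>R e + u) \<and> 0 \<le> l (max a b *\<^sub>R e - u)" if "l \<in> S" for l
  proof -
    have "linear l" using cone_setting_functional(1)[OF cs that] by (rule bounded_linear.linear)
    have "a * l e \<le> max a b * l e" "b * l e \<le> max a b * l e"
      using cone_setting_functional(2)[OF cs that] by (auto intro: mult_right_mono)
    thus ?thesis using a[OF that] b[OF that] \<open>linear l\<close>
      by (simp add: linear_add linear_diff linear_scale linear_neg)
  qed
  hence "max a b \<in> X" using \<open>0 \<le> a\<close> by (simp add: X_def)
  moreover have "Inf X < r"
    using cone_setting_norm_eq[OF cs \<open>u \<in> V\<close>] \<open>norm u < r\<close> by (simp add: order_unit_norm_def X_def)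
  ultimately have "\<exists>lam\<in>X. lam < r" by (intro cInf_lessD) auto
  thus ?thesis using that unfolding X_def by blast
qed

lemma cone_setting_one_le_norm_unit:
  assumes cs: "cone_setting V S e"
  shows "1 \<le> norm e"
proof (rule ccontr)
  assume "\<not> 1 \<le> norm e"
  hence "norm e < 1" by simp
  then obtain lam where "lam < 1" and bound: "\<And>l. l \<in> S \<Longrightarrow> 0 \<le> l (lam *\<^sub>R e - e)"
    by (rule cone_setting_order_bound_lt[OF cs cone_settingD(3)[OF cs]]) blast
  have "l e = 0" if "l \<in> S" for l
  proof -
    have "l (lam *\<^sub>R e - e) = (lam - 1) * l e"
      using cone_setting_functional(1)[OF cs that, THEN bounded_linear.linear]
      by (simp add: linear_diff linear_scale left_diff_distrib)
    hence "0 \<le> (lam - 1) * l e" using bound[OF that] by simp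
    thus ?thesis using cone_setting_functional(2)[OF cs that] \<open>lam < 1\<close>
      by (smt (verit) mult_neg_pos)
  qed
  hence "e = 0" using cone_settingD(3,5)[OF cs] by blast
  thus False using cone_settingD(4)[OF cs] by contradiction
qed

lemma cone_setting_nonneg_on_unit_ball:
  assumes cs: "cone_setting V S e" and "u \<in> V" and "norm u < 1" and "l \<in> S"
  shows "0 \<le> l (e + u)"
proof -
  obtain lam where "lam < 1" and bound: "0 \<le> l (lam *\<^sub>R e + u)"
    using cone_setting_order_bound_lt[OF cs \<open>u \<in> V\<close> \<open>norm u < 1\<close>] \<open>l \<in> S\<close> by blast
  have "l (e + u) = (1 - lam) * l e + l (lam *\<^sub>R e + u)"
    using cone_setting_functional(1)[OF cs \<open>l \<in> S\<close>, THEN bounded_linear.linear]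
    by (simp add: linear_add linear_scale algebra_simps)
  thus ?thesis using bound cone_setting_functional(2)[OF cs \<open>l \<in> S\<close>] \<open>lam < 1\<close> by simp
qed

lemma cone_setting_unit_ball_subset_real_cone:
  assumes cs: "cone_setting V S e" and "norm u < 1"
  shows "e + u \<in> real_cone S UNIV"
proof -
  have "0 \<le> l (e + u)" if "l \<in> S" for l
  proof -
    have "continuous_on UNIV (\<lambda>v. l (e + v))"
      using cone_setting_functional(1)[OF cs \<open>l \<in> S\<close>]
      by (intro bounded_linear.continuous_on[of l]) (auto intro: continuous_intros)
    hence closed: "closed {v. 0 \<le> l (e + v)}"
      by (intro closed_Collect_le) (auto intro: continuous_intros)
    have "ball 0 1 \<inter> V \<subseteq> {v. 0 \<le> l (e + v)}"
      using cone_setting_nonneg_on_unit_ball[OF cs _ _ \<open>l \<in> S\<close>] by auto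
    hence "closure (ball 0 1 \<inter> V) \<subseteq> {v. 0 \<le> l (e + v)}"
      using closed by (rule closure_minimal)
    moreover have "ball 0 1 \<inter> closure V \<subseteq> closure (ball 0 1 \<inter> V)"
      by (rule open_Int_closure_subset) simp
    ultimately show ?thesis using cone_settingD(2)[OF cs] \<open>norm u < 1\<close> by auto
  qed
  moreover have "e + u \<noteq> 0"
    using cone_setting_one_le_norm_unit[OF cs] \<open>norm u < 1\<close> by (auto simp: add_eq_0_iff2)
  ultimately show ?thesis by (simp add: real_cone_def)
qed

lemma cone_setting_ball_subset_complex_cone:
  assumes cs: "cone_setting V S e" and small: "norm (fst w) + norm (snd w) < 1"
  shows "(e, 0) + w \<in> complex_cone S"
proof -
  obtain p q where w: "w = (p, q)" by (cases w)
  have "e + (p - q) \<in> real_cone S UNIV" "e + (p + q) \<in> real_cone S UNIV"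
    using small norm_triangle_ineq4[of p q] norm_triangle_ineq[of p q] unfolding w
    by (auto intro!: cone_setting_unit_ball_subset_real_cone[OF cs])
  moreover have "(e, 0) + w = cscale (Complex (1/2) (-1/2)) (e + (p - q), e + (p + q))"
    by (simp add: w cscale_def algebra_simps scaleR_2[symmetric] flip: scaleR_add_left)
  moreover have "Complex (1/2) (-1/2) \<noteq> 0" by (simp add: complex_eq_iff)
  ultimately show ?thesis unfolding complex_cone_def by blast
qed

lemma of_real_functional_in_complex_dual_cone:
  assumes "bounded_linear m" and pos: "\<And>x. x \<in> real_cone S UNIV \<Longrightarrow> 0 < m x"
  shows "(\<lambda>x. complex_of_real (m x)) \<in> complex_dual_cone S"
proof -
  have bl: "bounded_linear (\<lambda>x. complex_of_real (m x))"
    using bounded_linear_compose[OF bounded_linear_of_real assms(1)] by (simp add: o_def)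
  have "capply (\<lambda>x. complex_of_real (m x)) w \<noteq> 0" if "w \<in> complex_cone S" for w
  proof -
    obtain c x y where w: "w = cscale c (x, y)" "c \<noteq> 0" "x \<in> real_cone S UNIV"
      using \<open>w \<in> complex_cone S\<close> by (auto simp: complex_cone_def)
    have "Re (capply (\<lambda>x. complex_of_real (m x)) (x, y)) = m x"
      by (simp add: capply_def)
    hence "capply (\<lambda>x. complex_of_real (m x)) (x, y) \<noteq> 0"
      using pos[OF \<open>x \<in> real_cone S UNIV\<close>] by auto
    thus ?thesis using w bl by (simp add: capply_cscale bounded_linear.linear)
  qed
  thus ?thesis using bl by (simp add: complex_dual_cone_def)
qed

lemma cone_setting_strictly_positive_functional:
  assumes "cone_setting V S e"
  shows "\<exists>m. bounded_linear m \<and> (\<forall>x\<in>real_cone S UNIV. (0::real) < m x)"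
proof -
  have "\<exists>m \<kappa>. m \<in> S_star S \<and> 0 < \<kappa> \<and> \<kappa> < 1 \<and> m e = 1 \<and>
      (\<forall>h\<in>real_cone S UNIV. \<kappa> * norm h \<le> m h)"
    using assms by (simp only: cone_setting_def)
  then obtain m \<kappa> where "m \<in> S_star S" "0 < \<kappa>"
    and bound: "\<And>x. x \<in> real_cone S UNIV \<Longrightarrow> \<kappa> * norm x \<le> m x"
    by blast
  have "0 < m x" if x: "x \<in> real_cone S UNIV" for x
  proof -
    have "0 < norm x" using x by (simp add: real_cone_def)
    thus ?thesis using bound[OF x] \<open>0 < \<kappa>\<close> by (smt (verit) mult_pos_pos)
  qed
  moreover have "bounded_linear m" using \<open>m \<in> S_star S\<close> by (simp add: S_star_def)
  ultimately show ?thesis by blast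
qed

lemma cone_setting_dual_bound:
  assumes cs: "cone_setting V S e" and L: "L \<in> complex_dual_cone S"
  shows "L e \<noteq> 0" and "cmod (capply L (cscale z h)) \<le> cmod z * sqrt 2 * cnorm h * cmod (L e)"
proof -
  have "linear L" and nonzero: "\<And>w. w \<in> complex_cone S \<Longrightarrow> capply L w \<noteq> 0"
    using L by (auto simp: complex_dual_cone_def bounded_linear.linear)
  have "(e, 0) \<in> complex_cone S"
    using cone_setting_ball_subset_complex_cone[OF cs, of 0] by simp
  thus "L e \<noteq> 0" using nonzero capply_real[OF \<open>linear L\<close>] by metis
  have "L e + c * capply L (cscale z h) \<noteq> 0" if "cmod c * (cmod z * sqrt 2 * cnorm h) < 1" for c
  proof -
    have "(e, 0) + cscale (c * z) h \<in> complex_cone S"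
      using that norm_cscale_le_cnorm[of "c * z" h]
      by (intro cone_setting_ball_subset_complex_cone[OF cs]) (simp add: norm_mult mult.assoc)
    thus ?thesis using nonzero \<open>linear L\<close> by (metis capply_add capply_cscale capply_real cscale_mult)
  qed
  thus "cmod (capply L (cscale z h)) \<le> cmod z * sqrt 2 * cnorm h * cmod (L e)"
    by (intro norm_le_if_affine_nonvanishing) (simp_all add: cnorm_nonneg)
qed

lemma delta_C_le_ln_ratio:
  assumes "Eset S h g \<noteq> {}" and "0 < \<alpha>"
    and bounds: "\<And>w. w \<in> Eset S h g \<Longrightarrow> \<alpha> \<le> cmod w \<and> cmod w \<le> \<beta>"
  shows "delta_C S h g \<le> ereal (ln (\<beta> / \<alpha>))" and "delta_C S h g < \<infinity>"
proof -
  define A where "A = cmod ` Eset S h g"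
  have "A \<noteq> {}" using assms(1) by (simp add: A_def)
  have "bdd_above A" "bdd_below A" using bounds by (auto simp: A_def intro!: bdd_aboveI2 bdd_belowI2)
  have "\<alpha> \<le> Inf A" "Sup A \<le> \<beta>"
    using bounds \<open>A \<noteq> {}\<close> by (auto simp: A_def intro!: cInf_greatest cSup_least)
  moreover have "Inf A \<le> Sup A" using \<open>A \<noteq> {}\<close> \<open>bdd_above A\<close> \<open>bdd_below A\<close> by (rule cInf_le_cSup)
  ultimately have "0 < Inf A" and "Sup A / Inf A \<le> \<beta> / \<alpha>"
    using \<open>0 < \<alpha>\<close> by (auto intro!: frac_le)
  moreover have "delta_C S h g = ereal (ln (Sup A / Inf A))"
    using \<open>A \<noteq> {}\<close> \<open>bdd_above A\<close> \<open>0 < Inf A\<close> by (simp add: delta_C_def A_def Let_def)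
  moreover have "0 < Sup A / Inf A" using \<open>0 < Inf A\<close> \<open>Inf A \<le> Sup A\<close> by simp
  ultimately show "delta_C S h g \<le> ereal (ln (\<beta> / \<alpha>))" and "delta_C S h g < \<infinity>"
    by (auto intro: ln_mono)
qed

lemma cone_setting_Eset_bounds:
  assumes cs: "cone_setting V S e" and "t = cmod z * sqrt 2 * cnorm h" and "t < 1"
    and w: "w \<in> Eset S (e, 0) ((e, 0) + cscale z h)"
  shows "1 / (1 + t) \<le> cmod w \<and> cmod w \<le> 1 / (1 - t)"
proof -
  obtain L where L: "L \<in> complex_dual_cone S"
    and w_eq: "w = capply L (e, 0) / capply L ((e, 0) + cscale z h)"
    using w unfolding Eset_def by blast
  have "linear L" using L by (simp add: complex_dual_cone_def bounded_linear.linear)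
  hence "w = L e / (L e + capply L (cscale z h))" by (simp add: w_eq capply_add capply_real)
  moreover have "cmod (capply L (cscale z h)) \<le> t * cmod (L e)"
    using cone_setting_dual_bound(2)[OF cs L] \<open>t = _\<close> by simp
  ultimately show ?thesis
    using norm_divide_add_bounds[OF cone_setting_dual_bound(1)[OF cs L] _ \<open>t < 1\<close>] by simp
qed

theorem lemma5p13:
  fixes V :: "'a::banach set" and S :: "('a \<Rightarrow> real) set" and e :: 'a
    and h :: "'a \<times> 'a" and z :: complex
  assumes "cone_setting V S e"
    and "cmod z * sqrt 2 * cnorm h < 1"
  shows "(e, 0) + cscale z h \<in> complex_cone S
    \<and> delta_C S (e, 0) ((e, 0) + cscale z h)
        \<le> ereal (ln ((1 + cmod z * sqrt 2 * cnorm h) / (1 - cmod z * sqrt 2 * cnorm h)))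
    \<and> delta_C S (e, 0) ((e, 0) + cscale z h) < \<infinity>"
proof -
  define t where "t = cmod z * sqrt 2 * cnorm h"
  have "0 \<le> t" "t < 1" using assms(2) by (simp_all add: t_def cnorm_nonneg)
  have cone: "(e, 0) + cscale z h \<in> complex_cone S"
    using norm_cscale_le_cnorm[of z h] assms(2)
    by (intro cone_setting_ball_subset_complex_cone[OF assms(1)]) simp
  have nonempty: "Eset S (e, 0) ((e, 0) + cscale z h) \<noteq> {}"
    using cone_setting_strictly_positive_functional[OF assms(1)] of_real_functional_in_complex_dual_cone
    unfolding Eset_def by blast
  have "0 < 1 / (1 + t)" using \<open>0 \<le> t\<close> by simp
  note delta = delta_C_le_ln_ratio[OF nonempty this cone_setting_Eset_bounds[OF assms(1) t_def \<open>t < 1\<close>]]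
  have "(1 / (1 - t)) / (1 / (1 + t)) = (1 + t) / (1 - t)" using \<open>0 \<le> t\<close> by simp
  thus ?thesis using cone delta by (simp add: t_def)
qed

end
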